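(* If there exists an $(N,NK,M,R)$ $\mathcal D_{RS}$-non-private scheme, then there exists an $(N,K,M,R)$-private scheme.
   Context: Files $W_0,\dots,W_{N-1}$ independent, each uniform on $[2^F]=\{0,\dots,2^F-1\}$, $\bar W=(W_0,\dots,W_{N-1})$; $[n]=\{0,\dots,n-1\}$. Non-private scheme for $N$ files and $L$ users with memory $M$ and rate $R$: cache encoders $C_j:[2^F]^N\to[2^{MF}]$ ($j\in[L]$), transmission encoder $E:[2^F]^N\times[N]^L\to[2^{RF}]$ (the demand vector is also transmitted), and decoders $G_j$ with $W_{d_j}=G_j(\bar d,E(\bar W,\bar d),C_j(\bar W))$. For a subset $\mathcal D\subseteq[N]^L$ of demand vectors, a $\mathcal D$-non-private scheme is one for which this decoding condition holds for all $\bar W$ and all $\bar d\in\mathcal D$. Restricted demand subset $\mathcal D_{RS}$ for $N$ files and $L=NK$ users: writing $\bar d\in[N]^{NK}$ as $K$ consecutive blocks $(\bar d^{(0)},\dots,\bar d^{(K-1)})$ of length $N$, $\mathcal D_{RS}$ is the set of all $\bar d$ such that each block $\bar d^{(i)}$ is a cyclic shift of $(0,1,\dots,N-1)$. Private scheme $(N,K,M,R)$: $K$ users with independent uniform demands $D_k\in[N]$, $\bar D=(D_0,\dots,D_{K-1})$, $\tilde D_k$ = all demands except $D_k$; user $k$ shares a key $S_k$ (finite alphabet) with the server, server private randomness $P$ (finite alphabet), all of $P$, $S_k$, $D_k$, $W_i$ mutually independent; cache $Z_k=(C_k(S_k,P,\bar W),S_k)$ with $C_k$ valued in $[2^{MF}]$;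 broadcast $X=(E(\bar W,\bar D,P,\bar S),J(\bar D,P,\bar S))$ with $E$ valued in $[2^{RF}]$ and $J$ valued in a finite set whose $\log_2$-size is negligible compared to $F$; user $k$ recovers $W_{D_k}$ exactly from $(D_k,S_k,X,Z_k)$; and $I(\tilde D_k;Z_k,X,D_k)=0$ for all $k$. *)

theory Defs
  imports "HOL-Probability.Probability"
begin

definition files :: "nat \<Rightarrow> nat \<Rightarrow> nat list set" where
  "files N F = {ws. length ws = N \<and> (\<forall>w\<in>set ws. w < 2 ^ F)}"

definition demands :: "nat \<Rightarrow> nat \<Rightarrow> nat list set" where
  "demands N L = {ds. length ds = L \<and> (\<forall>d\<in>set ds. d < N)}"

definition D_RS :: "nat \<Rightarrow> nat \<Rightarrow> nat list set" where
  "D_RS N K = {ds. length ds = N * K \<and>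
     (\<forall>i<K. \<exists>s. take N (drop (i * N) ds) = rotate s [0..<N])}"

text \<open>A D-non-private scheme for N files, L users, memory M and rate R, with file size F bits.
  C j W is the cache of user j, E W d the transmission, G j d x z the decoder of user j.\<close>
definition nonprivate_scheme ::
  "nat list set \<Rightarrow> nat \<Rightarrow> nat \<Rightarrow> real \<Rightarrow> real \<Rightarrow> nat \<Rightarrow> bool" where
  "nonprivate_scheme DS N L M R F \<longleftrightarrow>
    (\<exists>(C :: nat \<Rightarrow> nat list \<Rightarrow> nat) (E :: nat list \<Rightarrow> nat list \<Rightarrow> nat)
       (G :: nat \<Rightarrow> nat list \<Rightarrow> nat \<Rightarrow> nat \<Rightarrow> nat).
       (\<forall>j<L. \<forall>W\<in>files N F. real (C j W) < 2 powr (M * real F)) \<and>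
       (\<forall>W\<in>files N F. \<forall>d\<in>demands N L. real (E W d) < 2 powr (R * real F)) \<and>
       (\<forall>j<L. \<forall>W\<in>files N F. \<forall>d\<in>DS. G j d (E W d) (C j W) = W ! (d ! j)))"

text \<open>Joint distribution of (files, demands, server randomness P, keys S_0..S_{K-1}):
  files i.i.d. uniform on [2^F], demands i.i.d. uniform on [N], P ~ pP, S_k ~ pS k,
  all mutually independent.\<close>
definition joint_pmf ::
  "nat \<Rightarrow> nat \<Rightarrow> nat \<Rightarrow> nat pmf \<Rightarrow> (nat \<Rightarrow> nat pmf) \<Rightarrow>
   (nat list \<times> nat list \<times> nat \<times> nat list) pmf" where
  "joint_pmf N K F pP pS =
     bind_pmf (pmf_of_set (files N F)) (\<lambda>W.
     bind_pmf (pmf_of_set (demands N K)) (\<lambda>D.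
     bind_pmf pP (\<lambda>p.
     bind_pmf (map_pmf (\<lambda>f. map f [0..<K]) (Pi_pmf {..<K} 0 pS)) (\<lambda>S.
     return_pmf (W, D, p, S)))))"

definition other_demands :: "nat \<Rightarrow> nat \<Rightarrow> nat list \<Rightarrow> nat list" where
  "other_demands K k D = map (\<lambda>i. D ! i) (filter (\<lambda>i. i \<noteq> k) [0..<K])"

text \<open>An (N,K,M,R)-private scheme with file size F, in which the auxiliary transmission J
  takes values in the finite set [c] (the bound c will be independent of F, so that
  log2 c is negligible compared to F).
  C k s p W : cache content of user k (key s, server randomness p);
  E W D p S : main transmission; J D p S : auxiliary transmission;
  G k d s x z : decoder of user k from (D_k, S_k, X, Z_k).\<close>
definition private_scheme ::
  "nat \<Rightarrow> nat \<Rightarrow> real \<Rightarrow> real \<Rightarrow> nat \<Rightarrow> nat \<Rightarrow> bool" where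
  "private_scheme N K M R F c \<longleftrightarrow>
    (\<exists>(pP :: nat pmf) (pS :: nat \<Rightarrow> nat pmf)
       (C :: nat \<Rightarrow> nat \<Rightarrow> nat \<Rightarrow> nat list \<Rightarrow> nat)
       (E :: nat list \<Rightarrow> nat list \<Rightarrow> nat \<Rightarrow> nat list \<Rightarrow> nat)
       (J :: nat list \<Rightarrow> nat \<Rightarrow> nat list \<Rightarrow> nat)
       (G :: nat \<Rightarrow> nat \<Rightarrow> nat \<Rightarrow> nat \<times> nat \<Rightarrow> nat \<times> nat \<Rightarrow> nat).
       finite (set_pmf pP) \<and> (\<forall>k<K. finite (set_pmf (pS k))) \<and>
       (let \<Omega> = joint_pmf N K F pP pS;
            Z = (\<lambda>k (W, D, p, S). (C k (S ! k) p W, S ! k));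
            X = (\<lambda>(W, D, p, S). (E W D p S, J D p S))
        in
         (\<forall>k<K. \<forall>(W, D, p, S)\<in>set_pmf \<Omega>. real (C k (S ! k) p W) < 2 powr (M * real F)) \<and>
         (\<forall>(W, D, p, S)\<in>set_pmf \<Omega>. real (E W D p S) < 2 powr (R * real F)) \<and>
         (\<forall>(W, D, p, S)\<in>set_pmf \<Omega>. J D p S < c) \<and>
         (\<forall>k<K. \<forall>(W, D, p, S)\<in>set_pmf \<Omega>.
             G k (D ! k) (S ! k) (X (W, D, p, S)) (Z k (W, D, p, S)) = W ! (D ! k)) \<and>
         (\<forall>k<K. prob_space.mutual_information (measure_pmf \<Omega>) 2
             (count_space UNIV) (count_space UNIV)
             (\<lambda>(W, D, p, S). other_demands K k D)
             (\<lambda>\<omega>. (Z k \<omega>, X \<omega>, fst (snd \<omega>) ! k)) = 0)))"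

end

theory Submission
  imports Defs
begin

(* User k of the private scheme, holding a key S_k uniform on [N], plays the role of user
   k N + S_k of the non-private scheme. The server announces the offsets T_k = D_k - S_k mod N
   and serves the demand vector in D_RS whose k-th block is (0, ..., N-1) cyclically shifted
   by T_k, so that user k N + S_k asks for file S_k + T_k = D_k. For fixed D the offsets are
   uniform, hence independent of D; everything user k observes is a function of the files,
   D_k and the offsets (its key being D_k - T_k), and is therefore independent of the other
   demands. *)

section \<open>Independent random variables on a pmf\<close>

definition indep_pmf :: "'a pmf \<Rightarrow> ('a \<Rightarrow> 'b) \<Rightarrow> ('a \<Rightarrow> 'c) \<Rightarrow> bool" where
  "indep_pmf \<Omega> X Y \<longleftrightarrow>
     map_pmf (\<lambda>\<omega>. (X \<omega>, Y \<omega>)) \<Omega> = pair_pmf (map_pmf X \<Omega>) (map_pmf Y \<Omega>)"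

lemma indep_pmf_fst_snd: "indep_pmf (pair_pmf P Q) fst snd"
  by (simp add: indep_pmf_def map_fst_pair_pmf map_snd_pair_pmf)

lemma indep_pmf_commute:
  assumes "indep_pmf \<Omega> X Y"
  shows "indep_pmf \<Omega> Y X"
proof -
  have "map_pmf (\<lambda>\<omega>. (Y \<omega>, X \<omega>)) \<Omega>
      = map_pmf (\<lambda>(x, y). (y, x)) (map_pmf (\<lambda>\<omega>. (X \<omega>, Y \<omega>)) \<Omega>)"
    by (simp add: map_pmf_comp)
  also have "\<dots> = pair_pmf (map_pmf Y \<Omega>) (map_pmf X \<Omega>)"
    using assms unfolding indep_pmf_def
    by (subst pair_commute_pmf) (simp add: map_pmf_comp)
  finally show ?thesis
    unfolding indep_pmf_def .
qed

lemma indep_pmf_comp: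
  assumes "indep_pmf \<Omega> X Y"
  shows "indep_pmf \<Omega> (\<lambda>\<omega>. f (X \<omega>)) (\<lambda>\<omega>. g (Y \<omega>))"
proof -
  have "map_pmf (\<lambda>\<omega>. (f (X \<omega>), g (Y \<omega>))) \<Omega>
      = map_pmf (\<lambda>(x, y). (f x, g y)) (map_pmf (\<lambda>\<omega>. (X \<omega>, Y \<omega>)) \<Omega>)"
    by (simp add: map_pmf_comp)
  also have "\<dots> = pair_pmf (map_pmf f (map_pmf X \<Omega>)) (map_pmf g (map_pmf Y \<Omega>))"
    using assms by (simp add: indep_pmf_def map_pair)
  finally show ?thesis
    by (simp add: indep_pmf_def map_pmf_comp)
qed

lemma indep_pmf_map_pmf_iff:
  "indep_pmf (map_pmf h \<Omega>) X Y \<longleftrightarrow> indep_pmf \<Omega> (\<lambda>\<omega>. X (h \<omega>)) (\<lambda>\<omega>. Y (h \<omega>))"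
  by (simp add: indep_pmf_def map_pmf_comp)

lemma indep_pmf_cong:
  assumes "indep_pmf \<Omega> X Y"
    and "\<And>\<omega>. \<omega> \<in> set_pmf \<Omega> \<Longrightarrow> X \<omega> = X' \<omega>"
    and "\<And>\<omega>. \<omega> \<in> set_pmf \<Omega> \<Longrightarrow> Y \<omega> = Y' \<omega>"
  shows "indep_pmf \<Omega> X' Y'"
proof -
  have "map_pmf X \<Omega> = map_pmf X' \<Omega>" "map_pmf Y \<Omega> = map_pmf Y' \<Omega>"
    "map_pmf (\<lambda>\<omega>. (X \<omega>, Y \<omega>)) \<Omega> = map_pmf (\<lambda>\<omega>. (X' \<omega>, Y' \<omega>)) \<Omega>"
    using assms(2,3) by (auto intro: map_pmf_cong)
  then show ?thesis
    using assms(1) by (simp add: indep_pmf_def)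
qed

lemma indep_pmf_pair_pmf_extend:
  assumes "indep_pmf P X Y"
  shows "indep_pmf (pair_pmf P Q) (\<lambda>(p, q). X p) (\<lambda>(p, q). (Y p, q))"
proof -
  have "map_pmf (\<lambda>(p, q). (X p, Y p, q)) (pair_pmf P Q)
      = map_pmf (\<lambda>((x, y), q). (x, y, q)) (pair_pmf (map_pmf (\<lambda>p. (X p, Y p)) P) Q)"
    by (simp add: pair_map_pmf1 map_pmf_comp case_prod_unfold)
  also have "\<dots> = pair_pmf (map_pmf X P) (pair_pmf (map_pmf Y P) Q)"
    using assms by (simp add: indep_pmf_def pair_pair_pmf map_pmf_comp case_prod_unfold)
  finally have joint: "map_pmf (\<lambda>(p, q). (X p, Y p, q)) (pair_pmf P Q)
      = pair_pmf (map_pmf X P) (pair_pmf (map_pmf Y P) Q)" .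
  have "map_pmf (\<lambda>(p, q). X p) (pair_pmf P Q) = map_pmf X (map_pmf fst (pair_pmf P Q))"
    by (simp add: map_pmf_comp case_prod_unfold)
  then have marginal1: "map_pmf (\<lambda>(p, q). X p) (pair_pmf P Q) = map_pmf X P"
    by (simp only: map_fst_pair_pmf)
  have marginal2: "map_pmf (\<lambda>(p, q). (Y p, q)) (pair_pmf P Q) = pair_pmf (map_pmf Y P) Q"
    unfolding pair_map_pmf1 by (simp add: apfst_def map_prod_def)
  show ?thesis
    unfolding indep_pmf_def marginal1 marginal2 joint[symmetric]
    by (simp add: case_prod_unfold)
qed

lemma pair_measure_measure_pmf:
  fixes P :: "'a::countable pmf" and Q :: "'b::countable pmf"
  shows "measure_pmf P \<Otimes>\<^sub>M measure_pmf Q = measure_pmf (pair_pmf P Q)"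
proof (rule pair_measure_eqI)
  show "sigma_finite_measure (measure_pmf P)" "sigma_finite_measure (measure_pmf Q)"
    by (simp_all add: prob_space_imp_sigma_finite prob_space_measure_pmf)
  have "sets (measure_pmf P \<Otimes>\<^sub>M measure_pmf Q)
      = sets (count_space (UNIV :: 'a set) \<Otimes>\<^sub>M count_space (UNIV :: 'b set))"
    by (intro sets_pair_measure_cong) auto
  also have "\<dots> = sets (count_space UNIV)"
    by (subst pair_measure_countable) auto
  finally show "sets (measure_pmf P \<Otimes>\<^sub>M measure_pmf Q) = sets (measure_pmf (pair_pmf P Q))"
    by simp
  fix A B
  show "emeasure (measure_pmf P) A * emeasure (measure_pmf Q) B
      = emeasure (measure_pmf (pair_pmf P Q)) (A \<times> B)"
    by (simp add: measure_pmf.emeasure_eq_measure measure_pmf_prob_product ennreal_mult)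
qed

lemma mutual_information_eq_0_if_indep_pmf:
  fixes X :: "'a \<Rightarrow> 'b::countable" and Y :: "'a \<Rightarrow> 'c::countable"
  assumes "indep_pmf \<Omega> X Y"
  shows "prob_space.mutual_information (measure_pmf \<Omega>) b
           (count_space UNIV) (count_space UNIV) X Y = 0"
proof -
  have count_space_pair: "count_space (UNIV :: 'b set) \<Otimes>\<^sub>M count_space (UNIV :: 'c set) = count_space UNIV"
    by (subst pair_measure_countable) auto
  have "distr (measure_pmf \<Omega>) (count_space UNIV) X \<Otimes>\<^sub>M distr (measure_pmf \<Omega>) (count_space UNIV) Y
      = distr (measure_pmf \<Omega>) (count_space UNIV \<Otimes>\<^sub>M count_space UNIV) (\<lambda>\<omega>. (X \<omega>, Y \<omega>))"
    using assms unfolding indep_pmf_def count_space_pair map_pmf_rep_eq[symmetric]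
    by (simp add: pair_measure_measure_pmf)
  then show ?thesis
    unfolding prob_space.mutual_information_def[OF prob_space_measure_pmf]
    by (simp add: count_space_pair map_pmf_rep_eq[symmetric] sigma_finite_measure.KL_same_eq_0
        prob_space_imp_sigma_finite prob_space_measure_pmf)
qed

lemma map_pmf_shear_pair_pmf:
  assumes "\<And>p. p \<in> set_pmf P \<Longrightarrow> map_pmf (f p) Q = Q"
  shows "map_pmf (\<lambda>(p, q). (p, f p q)) (pair_pmf P Q) = pair_pmf P Q"
proof -
  have "map_pmf (\<lambda>(p, q). (p, f p q)) (pair_pmf P Q) = bind_pmf P (\<lambda>p. map_pmf (Pair p) (map_pmf (f p) Q))"
    by (simp add: pair_pmf_def map_bind_pmf map_pmf_comp bind_return_pmf map_pmf_def[symmetric])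
  also have "\<dots> = bind_pmf P (\<lambda>p. map_pmf (Pair p) Q)"
    using assms by (intro bind_pmf_cong) simp_all
  also have "\<dots> = pair_pmf P Q"
    by (simp add: pair_pmf_def map_pmf_def)
  finally show ?thesis .
qed

section \<open>Demand vectors\<close>

lemma demands_eq_lists: "demands N K = {ds. set ds \<subseteq> {..<N} \<and> length ds = K}"
  by (auto simp: demands_def)

lemma finite_demands: "finite (demands N K)"
  unfolding demands_eq_lists by (rule finite_lists_length_eq) simp

lemma card_demands: "card (demands N K) = N ^ K"
  unfolding demands_eq_lists by (simp add: card_lists_length_eq)

lemma demands_nonempty: "0 < N \<Longrightarrow> demands N K \<noteq> {}"
  by (auto simp: demands_def intro!: exI[of _ "replicate K 0"])

lemma finite_files: "finite (files N F)"
proof -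
  have "files N F = {ws. set ws \<subseteq> {..<2 ^ F} \<and> length ws = N}"
    by (auto simp: files_def)
  then show ?thesis
    by (simp add: finite_lists_length_eq)
qed

lemma files_nonempty: "files N F \<noteq> {}"
  by (auto simp: files_def intro!: exI[of _ "replicate N 0"])

lemma pmf_of_set_demands_conv_Pi_pmf:
  assumes "0 < N"
  shows "pmf_of_set (demands N K)
       = map_pmf (\<lambda>f. map f [0..<K]) (Pi_pmf {..<K} 0 (\<lambda>_. pmf_of_set {..<N}))"
proof -
  let ?P = "PiE_dflt {..<K} (0::nat) (\<lambda>_. {..<N})"
  have "inj_on (\<lambda>f. map f [0..<K]) ?P"
    by (rule inj_onI) (auto simp: PiE_dflt_def fun_eq_iff map_eq_conv)
  moreover have "(\<lambda>f. map f [0..<K]) ` ?P = demands N K"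
  proof (rule set_eqI iffI)+
    fix ds assume "ds \<in> demands N K"
    then have "(\<lambda>i. if i < K then ds ! i else 0) \<in> ?P"
      and "ds = map (\<lambda>i. if i < K then ds ! i else 0) [0..<K]"
      by (auto simp: PiE_dflt_def demands_def intro: nth_equalityI)
    then show "ds \<in> (\<lambda>f. map f [0..<K]) ` ?P"
      by blast
  qed (auto simp: PiE_dflt_def demands_def)
  moreover have "Pi_pmf {..<K} 0 (\<lambda>_. pmf_of_set {..<N}) = pmf_of_set ?P"
    using assms by (intro Pi_pmf_of_set) auto
  moreover have "?P \<noteq> {}" "finite ?P"
    using assms by (auto simp: PiE_dflt_empty_iff)
  ultimately show ?thesis
    by (simp add: map_pmf_of_set_inj)
qed

lemma indep_pmf_other_demands_nth:
  assumes "0 < N" "k < K"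
  shows "indep_pmf (pmf_of_set (demands N K)) (other_demands K k) (\<lambda>D. D ! k)"
proof -
  let ?U = "pmf_of_set {..<N}" and ?others = "{..<K} - {k}"
  have "Pi_pmf {..<K} 0 (\<lambda>_. ?U) = Pi_pmf (insert k ?others) 0 (\<lambda>_. ?U)"
    using assms by (simp add: insert_absorb)
  also have "\<dots> = map_pmf (\<lambda>(y, f). f(k := y)) (pair_pmf ?U (Pi_pmf ?others 0 (\<lambda>_. ?U)))"
    by (rule Pi_pmf_insert) auto
  finally have "pmf_of_set (demands N K)
      = map_pmf (\<lambda>(y, f). map (f(k := y)) [0..<K]) (pair_pmf ?U (Pi_pmf ?others 0 (\<lambda>_. ?U)))"
    using assms by (simp add: pmf_of_set_demands_conv_Pi_pmf map_pmf_comp case_prod_unfold)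
  moreover have "indep_pmf (pair_pmf ?U (Pi_pmf ?others 0 (\<lambda>_. ?U)))
      (\<lambda>\<omega>. map (snd \<omega>) (filter (\<lambda>i. i \<noteq> k) [0..<K])) fst"
    by (rule indep_pmf_comp[OF indep_pmf_commute[OF indep_pmf_fst_snd], where g = id, simplified])
  moreover have "other_demands K k (map (f(k := y)) [0..<K]) = map f (filter (\<lambda>i. i \<noteq> k) [0..<K])"
    for f y
    by (simp add: other_demands_def map_eq_conv)
  ultimately show ?thesis
    using assms(2) by (simp add: indep_pmf_map_pmf_iff case_prod_unfold)
qed

lemma mod_diff_mod_diff_cancel:
  fixes x y N :: nat
  assumes "x < N" "y < N"
  shows "(x + N - (x + N - y) mod N) mod N = y"
proof (cases "y \<le> x")
  case True
  then have "(x + N - y) mod N = x - y"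
    using assms by (simp add: mod_if)
  moreover have "x + N - (x - y) = y + N"
    using True assms by simp
  ultimately show ?thesis
    using assms by simp
next
  case False
  then have "(x + N - y) mod N = x + N - y"
    using assms by simp
  then show ?thesis
    using assms False by simp
qed

lemma mod_add_mod_diff_cancel:
  fixes x s N :: nat
  assumes "x < N" "s \<le> N"
  shows "(s + (x + N - s) mod N) mod N = x"
proof -
  have "(s + (x + N - s) mod N) mod N = (s + (x + N - s)) mod N"
    by (rule mod_add_right_eq)
  also have "s + (x + N - s) = x + N"
    using assms by simp
  finally show ?thesis
    using assms by simp
qed

definition demand_offsets :: "nat \<Rightarrow> nat list \<Rightarrow> nat list \<Rightarrow> nat list" where
  "demand_offsets N D S = map2 (\<lambda>d s. (d + N - s) mod N) D S"

lemma length_demand_offsets: "length (demand_offsets N D S) = min (length D) (length S)"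
  by (simp add: demand_offsets_def)

lemma nth_demand_offsets:
  "k < length D \<Longrightarrow> k < length S \<Longrightarrow> demand_offsets N D S ! k = (D ! k + N - S ! k) mod N"
  by (simp add: demand_offsets_def)

lemma demand_offsets_in_demands:
  "0 < N \<Longrightarrow> D \<in> demands N K \<Longrightarrow> S \<in> demands N K \<Longrightarrow> demand_offsets N D S \<in> demands N K"
  by (auto simp: demand_offsets_def demands_def set_zip)

lemma demand_offsets_involution:
  assumes "D \<in> demands N K" "S \<in> demands N K"
  shows "demand_offsets N D (demand_offsets N D S) = S"
  using assms
  by (intro nth_equalityI)
    (auto simp: demands_def demand_offsets_def mod_diff_mod_diff_cancel)

lemma map_pmf_demand_offsets:
  assumes "0 < N" "D \<in> demands N K"
  shows "map_pmf (demand_offsets N D) (pmf_of_set (demands N K)) = pmf_of_set (demands N K)"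
proof -
  have "bij_betw (demand_offsets N D) (demands N K) (demands N K)"
    using assms
    by (intro bij_betwI[where g = "demand_offsets N D"])
      (auto simp: demand_offsets_in_demands demand_offsets_involution)
  then show ?thesis
    using assms by (simp add: map_pmf_of_set_inj bij_betw_def finite_demands demands_nonempty)
qed

lemma take_drop_mult_concat:
  assumes "\<forall>xs\<in>set xss. length xs = n" "i < length xss"
  shows "take n (drop (i * n) (concat xss)) = xss ! i"
  using assms
proof (induction xss arbitrary: i)
  case Nil
  then show ?case by simp
next
  case (Cons xs xss)
  then show ?case
    by (cases i) (simp_all add: add.commute)
qed

lemma block_index_less:
  fixes k s N K :: nat
  assumes "k < K" "s < N"
  shows "k * N + s < N * K"
proof -
  have "k * N + s < Suc k * N"
    using assms(2) by simp
  also have "\<dots> \<le> K * N"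
    using assms(1) by (intro mult_le_mono1) simp
  finally show ?thesis
    by (simp add: mult.commute)
qed

definition cyclic_demands :: "nat \<Rightarrow> nat list \<Rightarrow> nat list" where
  "cyclic_demands N T = concat (map (\<lambda>t. rotate t [0..<N]) T)"

lemma length_cyclic_demands: "length (cyclic_demands N T) = N * length T"
  by (simp add: cyclic_demands_def length_concat comp_def sum_list_triv mult.commute)

lemma cyclic_demands_block:
  "i < length T \<Longrightarrow> take N (drop (i * N) (cyclic_demands N T)) = rotate (T ! i) [0..<N]"
  unfolding cyclic_demands_def by (subst take_drop_mult_concat) auto

lemma cyclic_demands_in_D_RS: "length T = K \<Longrightarrow> cyclic_demands N T \<in> D_RS N K"
  by (auto simp: D_RS_def length_cyclic_demands cyclic_demands_block)

lemma cyclic_demands_in_demands: "length T = K \<Longrightarrow> cyclic_demands N T \<in> demands N (N * K)"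
  unfolding demands_def
  by (auto simp: length_cyclic_demands) (auto simp: cyclic_demands_def split: if_splits)

lemma nth_cyclic_demands:
  assumes "k < length T" "s < N"
  shows "cyclic_demands N T ! (k * N + s) = (s + T ! k) mod N"
proof -
  have "k * N + s < N * length T"
    using assms by (rule block_index_less)
  then have "cyclic_demands N T ! (k * N + s) = take N (drop (k * N) (cyclic_demands N T)) ! s"
    using assms by (simp add: length_cyclic_demands)
  also have "\<dots> = (s + T ! k) mod N"
    using assms by (simp add: cyclic_demands_block nth_rotate add.commute)
  finally show ?thesis .
qed

lemma nth_demands_less: "D \<in> demands N K \<Longrightarrow> k < K \<Longrightarrow> D ! k < N"
  by (simp add: demands_def)

lemma demand_offsets_recover_key:
  assumes "D \<in> demands N K" "S \<in> demands N K" "k < K"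
  shows "(D ! k + N - demand_offsets N D S ! k) mod N = S ! k"
  using assms
  by (simp add: nth_demand_offsets nth_demands_less mod_diff_mod_diff_cancel demands_def)

lemma nth_cyclic_demands_demand_offsets:
  assumes D: "D \<in> demands N K" and S: "S \<in> demands N K" and k: "k < K"
  shows "cyclic_demands N (demand_offsets N D S) ! (k * N + S ! k) = D ! k"
proof -
  have "D ! k < N" "S ! k < N"
    using D S k by (simp_all add: nth_demands_less)
  moreover have "length D = K" "length S = K"
    using D S by (simp_all add: demands_def)
  ultimately show ?thesis
    using k
    by (simp add: nth_cyclic_demands length_demand_offsets nth_demand_offsets mod_add_mod_diff_cancel)
qed
section \<open>The private scheme\<close>

lemma joint_pmf_uniform_keys:
  assumes "0 < N"
  shows "joint_pmf N K F (return_pmf 0) (\<lambda>_. pmf_of_set {..<N})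
       = map_pmf (\<lambda>(D, S, W). (W, D, 0, S))
           (pair_pmf (pmf_of_set (demands N K))
             (pair_pmf (pmf_of_set (demands N K)) (pmf_of_set (files N F))))"
  unfolding joint_pmf_def pmf_of_set_demands_conv_Pi_pmf[OF assms, symmetric]
  by (simp add: pair_pmf_def map_bind_pmf bind_assoc_pmf bind_return_pmf
      bind_commute_pmf[of "pmf_of_set (files N F)"])

lemma set_pmf_joint_pmf_uniform_keys:
  assumes "0 < N"
  shows "set_pmf (joint_pmf N K F (return_pmf 0) (\<lambda>_. pmf_of_set {..<N}))
       = (\<lambda>(D, S, W). (W, D, 0, S)) ` (demands N K \<times> demands N K \<times> files N F)"
  using assms
  by (simp add: joint_pmf_uniform_keys finite_demands demands_nonempty finite_files files_nonempty)

lemma mutual_information_other_demands_eq_0: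
  fixes Obs :: "nat list \<times> nat list \<times> nat \<times> nat list \<Rightarrow> 'b::countable"
    and V :: "nat \<Rightarrow> nat list \<Rightarrow> nat list \<Rightarrow> 'b"
  assumes N: "0 < N" and k: "k < K"
    and observation: "\<And>W D S. D \<in> demands N K \<Longrightarrow> S \<in> demands N K \<Longrightarrow>
                Obs (W, D, 0, S) = V (D ! k) (demand_offsets N D S) W"
  shows "prob_space.mutual_information
           (measure_pmf (joint_pmf N K F (return_pmf 0) (\<lambda>_. pmf_of_set {..<N}))) 2
           (count_space UNIV) (count_space UNIV) (\<lambda>(W, D, p, S). other_demands K k D) Obs = 0"
proof -
  let ?U = "pmf_of_set (demands N K)"
  let ?\<Omega> = "pair_pmf ?U (pair_pmf ?U (pmf_of_set (files N F)))"
  let ?shear = "\<lambda>(D, SW). (D, apfst (demand_offsets N D) SW)"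
  have shear: "map_pmf ?shear ?\<Omega> = ?\<Omega>"
    using N by (intro map_pmf_shear_pair_pmf)
      (simp add: pair_map_pmf1[symmetric] map_pmf_demand_offsets finite_demands demands_nonempty)
  have "indep_pmf ?\<Omega> (\<lambda>(D, TW). other_demands K k D) (\<lambda>(D, TW). (D ! k, TW))"
    by (rule indep_pmf_pair_pmf_extend[OF indep_pmf_other_demands_nth[OF N k]])
  from indep_pmf_comp[OF this, where f = id and g = "\<lambda>(y, T, W). V y T W"]
  have "indep_pmf ?\<Omega> (\<lambda>(D, TW). other_demands K k D) (\<lambda>(D, T, W). V (D ! k) T W)"
    by (simp add: case_prod_unfold)
  then have "indep_pmf ?\<Omega> (\<lambda>(D, S, W). other_demands K k D)
      (\<lambda>(D, S, W). V (D ! k) (demand_offsets N D S) W)"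
    by (subst (asm) shear[symmetric]) (simp add: indep_pmf_map_pmf_iff case_prod_unfold)
  then have "indep_pmf ?\<Omega> (\<lambda>(D, S, W). other_demands K k D) (\<lambda>(D, S, W). Obs (W, D, 0, S))"
    by (rule indep_pmf_cong)
      (use N in \<open>auto simp: observation finite_demands demands_nonempty finite_files files_nonempty\<close>)
  then have "indep_pmf (joint_pmf N K F (return_pmf 0) (\<lambda>_. pmf_of_set {..<N}))
      (\<lambda>(W, D, p, S). other_demands K k D) Obs"
    by (simp add: joint_pmf_uniform_keys[OF N] indep_pmf_map_pmf_iff case_prod_unfold)
  then show ?thesis
    by (rule mutual_information_eq_0_if_indep_pmf)
qed

lemma private_scheme_if_nonprivate_scheme:
  assumes N: "0 < N" and nonprivate: "nonprivate_scheme (D_RS N K) N (N * K) M R F"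
  shows "private_scheme N K M R F (N ^ K)"
proof -
  obtain Cn En Gn where
    Cn: "\<forall>j<N * K. \<forall>W\<in>files N F. real (Cn j W) < 2 powr (M * real F)"
    and En: "\<forall>W\<in>files N F. \<forall>d\<in>demands N (N * K). real (En W d) < 2 powr (R * real F)"
    and Gn: "\<forall>j<N * K. \<forall>W\<in>files N F. \<forall>d\<in>D_RS N K. Gn j d (En W d) (Cn j W) = W ! (d ! j)"
    using nonprivate unfolding nonprivate_scheme_def by blast
  obtain code where code: "bij_betw code (demands N K) {0..<N ^ K}"
    using ex_bij_betw_finite_nat[OF finite_demands] by (auto simp: card_demands)
  define C where "C k s (p::nat) W = Cn (k * N + s) W" for k s p W
  define E where "E W D (p::nat) S = En W (cyclic_demands N (demand_offsets N D S))" for W D p S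
  define J where "J D (p::nat) S = code (demand_offsets N D S)" for D p S
  define G where "G k (d::nat) s X Z =
    Gn (k * N + s) (cyclic_demands N (inv_into (demands N K) code (snd X))) (fst X) (fst Z)"
    for k d s X and Z :: "nat \<times> nat"
  let ?\<Omega> = "joint_pmf N K F (return_pmf 0) (\<lambda>_. pmf_of_set {..<N})"
  have offsets: "demand_offsets N D S \<in> demands N K" "length (demand_offsets N D S) = K"
    if "D \<in> demands N K" "S \<in> demands N K" for D S
    using demand_offsets_in_demands[OF N that] by (auto simp: demands_def)
  have decode: "G k (D ! k) (S ! k) (E W D 0 S, J D 0 S) (C k (S ! k) 0 W, S ! k) = W ! (D ! k)"
    if k: "k < K" and W: "W \<in> files N F" and D: "D \<in> demands N K" and S: "S \<in> demands N K"
    for k W D S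
  proof -
    have "inv_into (demands N K) code (code (demand_offsets N D S)) = demand_offsets N D S"
      using code offsets[OF D S] by (simp add: bij_betw_def)
    then show ?thesis
      using Gn W block_index_less[OF k nth_demands_less[OF S k]]
        cyclic_demands_in_D_RS[OF offsets(2)[OF D S]] nth_cyclic_demands_demand_offsets[OF D S k]
      by (simp add: G_def E_def J_def C_def)
  qed
  have privacy: "prob_space.mutual_information (measure_pmf ?\<Omega>) 2
      (count_space UNIV) (count_space UNIV) (\<lambda>(W, D, p, S). other_demands K k D)
      (\<lambda>\<omega>. ((\<lambda>(W, D, p, S). (C k (S ! k) p W, S ! k)) \<omega>,
             (\<lambda>(W, D, p, S). (E W D p S, J D p S)) \<omega>, fst (snd \<omega>) ! k)) = 0"
    if k: "k < K" for k
    by (rule mutual_information_other_demands_eq_0[OF N k, where V = "\<lambda>y T W.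
          let s = (y + N - T ! k) mod N in
          ((Cn (k * N + s) W, s), (En W (cyclic_demands N T), code T), y)"])
      (simp add: k demand_offsets_recover_key C_def E_def J_def Let_def)
  show ?thesis
    unfolding private_scheme_def Let_def
    using Cn En code offsets decode privacy N
    by (intro exI[of _ "return_pmf 0"] exI[of _ "\<lambda>_. pmf_of_set {..<N}"]
        exI[of _ C] exI[of _ E] exI[of _ J] exI[of _ G] conjI)
      (auto simp: set_pmf_joint_pmf_uniform_keys[OF N] C_def E_def J_def bij_betw_def
        lessThan_empty_iff nth_demands_less block_index_less cyclic_demands_in_demands)
qed

theorem theorem4:
  fixes N K :: nat and M R :: real
  assumes "N \<ge> 1"
  shows "\<exists>c::nat. \<forall>F::nat.
           nonprivate_scheme (D_RS N K) N (N * K) M R F \<longrightarrow> private_scheme N K M R F c"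
proof (intro exI allI impI)
  fix F
  assume "nonprivate_scheme (D_RS N K) N (N * K) M R F"
  with assms show "private_scheme N K M R F (N ^ K)"
    by (simp add: private_scheme_if_nonprivate_scheme)
qed

end
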